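(* Let $n \ge 1$, let $F \in \mathbb{C}^{n \times n}$ be a unitary matrix with $|F_{ij}|^2 \leq \frac{c}{n}$ for all $i,j$ (for some constant $c>0$), let $I \in \mathbb{C}^{n\times n}$ be the identity matrix, and let $A = [F \enspace I] \in \mathbb{C}^{n \times 2n}$. Let $y = F\hat{x} + e$, where $\hat{x}, e \in \mathbb{C}^n$ and $e$ is $t$-sparse. Let $1 \leq k \leq n$ be an integer, let $T$ be a positive integer, and let $x^{[T+1]} = \mathrm{IHT}(y,A,k,t,T)$ be the output of the $(k,t)$-Iterative Hard Thresholding algorithm described in the context. Write $x^{[T+1]} = [\hat{x}^{[T+1]} \enspace e^{[T+1]}]^T$ with $\hat{x}^{[T+1]}, e^{[T+1]} \in \mathbb{C}^n$. (a) Define $\rho := \sqrt{27}\sqrt{\frac{ckt}{n}}$ and $\tau$ by $\tau(1-\rho) := \sqrt{3}\sqrt{1 + 2\sqrt{\frac{ckt}{n}}}$. If $0<\rho<1$, then $$\| \hat{x}^{[T+1]} - \hat{x}_{h(k)} \|_2 \leq \rho^{T+1} \sqrt{ \| \hat{x}_{h(k)} \|_2^2 + \|e\|_2^2 } + \tau\| \hat{x}_{t(k)} \|_2 .$$ Moreover, for any $0<\epsilon<1$ and any $T \geq \frac{\log(1/\epsilon) + \log\left(\sqrt{ \| \hat{x}_{h(k)} \|_2^2 + \|e\|_2^2 }\right)}{\log(1/\rho)}$, we have $\| \hat{x}^{[T+1]} - \hat{x}_{h(k)} \|_2 \leq \tau\| \hat{x}_{t(k)} \|_2 + \epsilon$.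 (b) Define instead $\rho := 2\sqrt{2}\sqrt{\frac{ckt}{n}}$ and $\tau$ by $\tau(1-\rho) := 2$. If $0<\rho<1$, then $$\| \hat{x}^{[T+1]} - \hat{x}_{h(k)} \|_2 \leq \rho^{T+1}\| \hat{x}_{h(k)}\|_2 + \tau\left(\|\hat{x}_{t(k)}\|_2 + \|e\|_2\right).$$ Moreover, for any $0<\epsilon<1$ and any $T \geq \frac{\log(1/\epsilon) + \log(\| \hat{x}_{h(k)}\|_2)}{\log(1/\rho)}$, we have $\| \hat{x}^{[T+1]} - \hat{x}_{h(k)} \|_2 \leq \tau\left(\|\hat{x}_{t(k)}\|_2 + \|e\|_2\right) + \epsilon$.
   Context: A vector is $k$-sparse if it has at most $k$ nonzero entries. For $x \in \mathbb{C}^n$, $x_{h(k)}$ denotes a $k$-sparse vector in $\mathbb{C}^n$ consisting of $k$ largest (in absolute value) entries of $x$ with all other entries set to zero (ties broken by a fixed predefined rule), and $x_{t(k)} := x - x_{h(k)}$. For $x = [x_1 \enspace x_2]^T \in \mathbb{C}^{2n}$ with $x_1,x_2\in\mathbb{C}^n$, $x_{h(k,t)} := [ (x_1)_{h(k)} \enspace (x_2)_{h(t)} ]^T$. The $(k,t)$-Iterative Hard Thresholding algorithm $\mathrm{IHT}(y,A,k,t,T)$, for $y\in\mathbb{C}^n$, $A \in \mathbb{C}^{n\times 2n}$ and positive integers $k,t,T$: set $x^{[0]} = 0 \in \mathbb{C}^{2n}$; for $i = 0,1,\dots,T$ set $z^{[i+1]} = x^{[i]} + A^*(y - Ax^{[i]})$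 and $x^{[i+1]} = (z^{[i+1]})_{h(k,t)}$; return $x^{[T+1]}$. Here $A^*$ is the conjugate transpose. *)

theory Defs
  imports "HOL-Analysis.Analysis"
begin

text \<open>Vectors in C^m are represented as functions nat => complex, only the
entries with index < m being relevant; matrices as nat => nat => complex.\<close>

definition l2norm :: "nat \<Rightarrow> (nat \<Rightarrow> complex) \<Rightarrow> real" where
  "l2norm m x = sqrt (\<Sum>i<m. (cmod (x i))\<^sup>2)"

definition mat_vec :: "nat \<Rightarrow> (nat \<Rightarrow> nat \<Rightarrow> complex) \<Rightarrow> (nat \<Rightarrow> complex) \<Rightarrow> (nat \<Rightarrow> complex)" where
  "mat_vec p M x = (\<lambda>i. \<Sum>j<p. M i j * x j)"

definition adj :: "(nat \<Rightarrow> nat \<Rightarrow> complex) \<Rightarrow> (nat \<Rightarrow> nat \<Rightarrow> complex)" where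
  "adj M = (\<lambda>i j. cnj (M j i))"

definition unitary_mat :: "nat \<Rightarrow> (nat \<Rightarrow> nat \<Rightarrow> complex) \<Rightarrow> bool" where
  "unitary_mat n F \<longleftrightarrow>
     (\<forall>i<n. \<forall>j<n. (\<Sum>l<n. cnj (F l i) * F l j) = (if i = j then 1 else 0))"

definition block_FI :: "nat \<Rightarrow> (nat \<Rightarrow> nat \<Rightarrow> complex) \<Rightarrow> (nat \<Rightarrow> nat \<Rightarrow> complex)" where
  "block_FI n F = (\<lambda>i j. if j < n then F i j else if j - n = i then 1 else 0)"

definition thr_rule :: "nat \<Rightarrow> ((nat \<Rightarrow> complex) \<Rightarrow> nat \<Rightarrow> nat set) \<Rightarrow> bool" where
  "thr_rule n sel \<longleftrightarrow>
     (\<forall>x k. sel x k \<subseteq> {..<n} \<and> card (sel x k) = min k n \<and>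
        (\<forall>i\<in>sel x k. \<forall>j<n. j \<notin> sel x k \<longrightarrow> cmod (x j) \<le> cmod (x i)))"

definition hk :: "((nat \<Rightarrow> complex) \<Rightarrow> nat \<Rightarrow> nat set) \<Rightarrow> nat \<Rightarrow> (nat \<Rightarrow> complex) \<Rightarrow> (nat \<Rightarrow> complex)" where
  "hk sel k x = (\<lambda>i. if i \<in> sel x k then x i else 0)"

definition tk :: "((nat \<Rightarrow> complex) \<Rightarrow> nat \<Rightarrow> nat set) \<Rightarrow> nat \<Rightarrow> (nat \<Rightarrow> complex) \<Rightarrow> (nat \<Rightarrow> complex)" where
  "tk sel k x = (\<lambda>i. x i - hk sel k x i)"

text \<open>x_{h(k,t)} for x = [x1 x2] in C^{2n}: x1 = x(0..n-1), x2 = x(n..2n-1).\<close>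
definition hkt :: "nat \<Rightarrow> ((nat \<Rightarrow> complex) \<Rightarrow> nat \<Rightarrow> nat set) \<Rightarrow> nat \<Rightarrow> nat \<Rightarrow> (nat \<Rightarrow> complex) \<Rightarrow> (nat \<Rightarrow> complex)" where
  "hkt n sel k t x = (\<lambda>i. if i < n then hk sel k x i
                          else if i < 2 * n then hk sel t (\<lambda>j. x (n + j)) (i - n)
                          else 0)"

definition iht_step :: "nat \<Rightarrow> ((nat \<Rightarrow> complex) \<Rightarrow> nat \<Rightarrow> nat set) \<Rightarrow> (nat \<Rightarrow> complex) \<Rightarrow>
    (nat \<Rightarrow> nat \<Rightarrow> complex) \<Rightarrow> nat \<Rightarrow> nat \<Rightarrow> (nat \<Rightarrow> complex) \<Rightarrow> (nat \<Rightarrow> complex)" where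
  "iht_step n sel y A k t x =
     hkt n sel k t (\<lambda>i. x i + mat_vec n (adj A) (\<lambda>r. y r - mat_vec (2 * n) A x r) i)"

text \<open>IHT(y,A,k,t,T): x^{[0]} = 0, iterations i = 0..T, return x^{[T+1]}.\<close>
definition IHT :: "nat \<Rightarrow> ((nat \<Rightarrow> complex) \<Rightarrow> nat \<Rightarrow> nat set) \<Rightarrow> (nat \<Rightarrow> complex) \<Rightarrow>
    (nat \<Rightarrow> nat \<Rightarrow> complex) \<Rightarrow> nat \<Rightarrow> nat \<Rightarrow> nat \<Rightarrow> (nat \<Rightarrow> complex)" where
  "IHT n sel y A k t T = (iht_step n sel y A k t ^^ Suc T) (\<lambda>_. 0)"

end

theory Submission
  imports Defs
begin

(* Write an iterate as x = [a; b] and the measurements as y = F x_h + w, where x_h = xhat_{h(k)}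
   and w = F xhat_{t(k)} + e is the effective noise. Since F is unitary, one gradient step gives
   the proxy [x_h + F^*(w - b); F(x_h - a) + w]. Hard thresholding at most triples the squared
   error on the union of the old and new supports, because the true entries it discards are
   dominated by the entries it keeps. Incoherence bounds F and F^* from p-sparse inputs to q
   output coordinates by sqrt (c p q / n), so each step contracts the error by rho: in (a) the
   pair (a, b) is compared with (x_h, e), using that e is t-sparse; in (b) a is compared with x_h
   and b with 0, all of e being treated as noise. Unrolling the recursion gives rho^(T+1) times
   the initial error plus tau times the noise, and the statements with epsilon follow by taking
   logarithms. *)

section \<open>Norms and supports of vectors\<close>

definition l2norm_on :: "nat set \<Rightarrow> (nat \<Rightarrow> complex) \<Rightarrow> real" where
  "l2norm_on A x = L2_set (\<lambda>i. cmod (x i)) A"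

definition coord_proj :: "nat set \<Rightarrow> (nat \<Rightarrow> complex) \<Rightarrow> nat \<Rightarrow> complex" where
  "coord_proj A x = (\<lambda>i. if i \<in> A then x i else 0)"

definition nonzeros :: "nat \<Rightarrow> (nat \<Rightarrow> complex) \<Rightarrow> nat set" where
  "nonzeros n x = {i. i < n \<and> x i \<noteq> 0}"

lemma l2norm_on_nonneg [simp]: "0 \<le> l2norm_on A x"
  unfolding l2norm_on_def by simp

lemma l2norm_eq_l2norm_on: "l2norm n x = l2norm_on {..<n} x"
  unfolding l2norm_def l2norm_on_def L2_set_def by simp

lemma l2norm_on_square: "(l2norm_on A x)\<^sup>2 = (\<Sum>i\<in>A. (cmod (x i))\<^sup>2)"
  unfolding l2norm_on_def L2_set_def by (simp add: sum_nonneg)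

lemma of_real_l2norm_on_square: "complex_of_real ((l2norm_on A x)\<^sup>2) = (\<Sum>i\<in>A. cnj (x i) * x i)"
  unfolding l2norm_on_square of_real_sum
  by (intro sum.cong refl) (metis complex_norm_square mult.commute)

lemma l2norm_on_zero [simp]: "l2norm_on A (\<lambda>_. 0) = 0"
  unfolding l2norm_on_def L2_set_def by simp

lemma l2norm_on_uminus [simp]: "l2norm_on A (\<lambda>i. - x i) = l2norm_on A x"
  unfolding l2norm_on_def by simp

lemma l2norm_on_cong: "(\<And>i. i \<in> A \<Longrightarrow> x i = y i) \<Longrightarrow> l2norm_on A x = l2norm_on A y"
  unfolding l2norm_on_def by (rule L2_set_cong) auto

lemma l2norm_on_add_le: "l2norm_on A (\<lambda>i. x i + y i) \<le> l2norm_on A x + l2norm_on A y"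
proof -
  have "l2norm_on A (\<lambda>i. x i + y i) \<le> L2_set (\<lambda>i. cmod (x i) + cmod (y i)) A"
    unfolding l2norm_on_def by (rule L2_set_mono) (auto simp: norm_triangle_ineq)
  also have "\<dots> \<le> l2norm_on A x + l2norm_on A y"
    unfolding l2norm_on_def by (rule L2_set_triangle_ineq)
  finally show ?thesis .
qed

lemma l2norm_on_diff_le: "l2norm_on A (\<lambda>i. x i - y i) \<le> l2norm_on A x + l2norm_on A y"
  using l2norm_on_add_le[of A x "\<lambda>i. - y i"] by (simp add: l2norm_on_def)

lemma l2norm_on_minus_commute: "l2norm_on A (\<lambda>i. x i - y i) = l2norm_on A (\<lambda>i. y i - x i)"
  unfolding l2norm_on_def by (simp add: norm_minus_commute)

lemma l2norm_on_subset_le: "finite B \<Longrightarrow> A \<subseteq> B \<Longrightarrow> l2norm_on A x \<le> l2norm_on B x"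
  unfolding l2norm_on_def L2_set_def by (simp add: sum_mono2)

lemma l2norm_on_coord_proj:
  assumes "finite B" "A \<subseteq> B"
  shows "l2norm_on B (coord_proj A x) = l2norm_on A x"
proof -
  have "l2norm_on B (coord_proj A x) = l2norm_on A (coord_proj A x)"
    unfolding l2norm_on_def L2_set_def
    by (rule arg_cong[where f = sqrt], rule sum.mono_neutral_right)
       (use assms in \<open>auto simp: coord_proj_def\<close>)
  also have "\<dots> = l2norm_on A x" by (rule l2norm_on_cong) (simp add: coord_proj_def)
  finally show ?thesis .
qed

lemma l2norm_on_le_const:
  assumes "\<And>i. i \<in> A \<Longrightarrow> cmod (x i) \<le> K" "0 \<le> K"
  shows "l2norm_on A x \<le> sqrt (card A) * K"
proof -
  have "l2norm_on A x \<le> L2_set (\<lambda>_. K) A"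
    unfolding l2norm_on_def by (rule L2_set_mono) (use assms in auto)
  then show ?thesis using assms by (simp add: L2_set_constant)
qed

lemma cmod_sum_cnj_mult_le: "cmod (\<Sum>i\<in>A. cnj (x i) * y i) \<le> l2norm_on A x * l2norm_on A y"
proof -
  have "cmod (\<Sum>i\<in>A. cnj (x i) * y i) \<le> (\<Sum>i\<in>A. \<bar>cmod (x i)\<bar> * \<bar>cmod (y i)\<bar>)"
    by (rule order_trans[OF norm_sum]) (simp add: norm_mult)
  also have "\<dots> \<le> l2norm_on A x * l2norm_on A y"
    unfolding l2norm_on_def by (rule L2_set_mult_ineq)
  finally show ?thesis .
qed

lemma sum_cmod_le_sqrt_card: "(\<Sum>i\<in>A. cmod (x i)) \<le> sqrt (card A) * l2norm_on A x"
  using L2_set_mult_ineq[of "\<lambda>_. 1::real" "\<lambda>i. cmod (x i)" A]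
  by (simp add: l2norm_on_def L2_set_constant)

lemma cmod_add_square: "(cmod (a + b))\<^sup>2 = (cmod a)\<^sup>2 + (cmod b)\<^sup>2 + 2 * Re (cnj a * b)"
  by (simp only: cmod_power2) (simp add: power2_eq_square algebra_simps)

lemma cmod_square_le_diff: "(cmod z)\<^sup>2 \<le> 2 * (cmod (u - z))\<^sup>2 + 2 * (cmod u)\<^sup>2"
proof -
  have "cmod z \<le> cmod (u - z) + cmod u"
    using norm_triangle_ineq4[of u "u - z"] by simp
  then have "(cmod z)\<^sup>2 \<le> (cmod (u - z) + cmod u)\<^sup>2" by (simp add: power_mono)
  also have "\<dots> \<le> 2 * (cmod (u - z))\<^sup>2 + 2 * (cmod u)\<^sup>2"
    using sum_squares_bound[of "cmod (u - z)" "cmod u"] by (simp add: power2_sum)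
  finally show ?thesis .
qed

lemma finite_nonzeros [simp]: "finite (nonzeros n x)"
  unfolding nonzeros_def by simp

lemma nonzeros_subset: "nonzeros n x \<subseteq> {..<n}"
  unfolding nonzeros_def by auto

lemma card_nonzeros_le: "card (nonzeros n x) \<le> n"
  using card_mono[OF finite_lessThan nonzeros_subset] by simp

lemma nonzeros_coord_proj_subset: "nonzeros n (coord_proj A x) \<subseteq> A"
  unfolding nonzeros_def coord_proj_def by auto

lemma card_nonzeros_coord_proj_le: "finite A \<Longrightarrow> card (nonzeros n (coord_proj A x)) \<le> card A"
  by (rule card_mono[OF _ nonzeros_coord_proj_subset])

lemma nonzeros_diff_subset: "nonzeros n (\<lambda>i. x i - y i) \<subseteq> nonzeros n x \<union> nonzeros n y"
  unfolding nonzeros_def by auto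

lemma card_nonzeros_diff_le:
  assumes "card (nonzeros n x) \<le> p" "card (nonzeros n y) \<le> q"
  shows "card (nonzeros n (\<lambda>i. x i - y i)) \<le> p + q"
proof -
  have "card (nonzeros n (\<lambda>i. x i - y i)) \<le> card (nonzeros n x \<union> nonzeros n y)"
    by (rule card_mono) (simp_all add: nonzeros_diff_subset)
  then show ?thesis using card_Un_le[of "nonzeros n x" "nonzeros n y"] assms by linarith
qed

lemma nonzeros_cong: "(\<And>i. i < n \<Longrightarrow> x i = y i) \<Longrightarrow> nonzeros n x = nonzeros n y"
  unfolding nonzeros_def by auto

section \<open>Unitary and incoherent matrices\<close>

lemma mat_vec_add: "mat_vec p M (\<lambda>l. a l + b l) = (\<lambda>r. mat_vec p M a r + mat_vec p M b r)"
  by (simp add: mat_vec_def algebra_simps sum.distrib)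

lemma mat_vec_cong: "(\<And>l. l < p \<Longrightarrow> a l = b l) \<Longrightarrow> mat_vec p M a = mat_vec p M b"
  by (simp add: mat_vec_def)

lemma mat_vec_diff: "mat_vec p M (\<lambda>l. a l - b l) = (\<lambda>r. mat_vec p M a r - mat_vec p M b r)"
  by (simp add: mat_vec_def algebra_simps sum_subtractf)

lemma sum_cnj_mat_vec_adj:
  "(\<Sum>r<n. cnj (mat_vec n F w r) * v r) = (\<Sum>i<n. cnj (w i) * mat_vec n (adj F) v i)"
proof -
  have "(\<Sum>r<n. cnj (mat_vec n F w r) * v r) = (\<Sum>r<n. \<Sum>i<n. cnj (F r i) * cnj (w i) * v r)"
    by (simp add: mat_vec_def sum_distrib_right)
  also have "\<dots> = (\<Sum>i<n. \<Sum>r<n. cnj (F r i) * cnj (w i) * v r)" by (rule sum.swap)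
  also have "\<dots> = (\<Sum>i<n. cnj (w i) * mat_vec n (adj F) v i)"
    by (simp add: mat_vec_def adj_def sum_distrib_left mult_ac)
  finally show ?thesis .
qed

lemma unitary_mat_vec_adj_mat_vec:
  assumes "unitary_mat n F" "j < n"
  shows "mat_vec n (adj F) (mat_vec n F d) j = d j"
proof -
  have "mat_vec n (adj F) (mat_vec n F d) j = (\<Sum>r<n. \<Sum>l<n. cnj (F r j) * F r l * d l)"
    by (simp add: mat_vec_def adj_def sum_distrib_left mult_ac)
  also have "\<dots> = (\<Sum>l<n. (\<Sum>r<n. cnj (F r j) * F r l) * d l)"
    by (subst sum.swap) (simp add: sum_distrib_right)
  also have "\<dots> = (\<Sum>l<n. if j = l then d l else 0)"
    using assms unfolding unitary_mat_def by (intro sum.cong) auto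
  also have "\<dots> = d j" using assms by simp
  finally show ?thesis .
qed

lemma unitary_l2norm_mat_vec:
  assumes "unitary_mat n F"
  shows "l2norm_on {..<n} (mat_vec n F w) = l2norm_on {..<n} w"
proof -
  have "complex_of_real ((l2norm_on {..<n} (mat_vec n F w))\<^sup>2)
      = (\<Sum>i<n. cnj (w i) * mat_vec n (adj F) (mat_vec n F w) i)"
    unfolding of_real_l2norm_on_square by (rule sum_cnj_mat_vec_adj)
  also have "\<dots> = complex_of_real ((l2norm_on {..<n} w)\<^sup>2)"
    unfolding of_real_l2norm_on_square using unitary_mat_vec_adj_mat_vec[OF assms] by simp
  finally have "(l2norm_on {..<n} (mat_vec n F w))\<^sup>2 = (l2norm_on {..<n} w)\<^sup>2"
    by (simp only: of_real_eq_iff)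
  then show ?thesis by (simp add: power2_eq_iff_nonneg)
qed

lemma incoherent_mat_vec_bound:
  assumes coh: "\<forall>i<n. \<forall>j<n. (cmod (M i j))\<^sup>2 \<le> \<mu>" and "0 \<le> \<mu>"
    and Q: "Q \<subseteq> {..<n}" "card Q \<le> q" and P: "card (nonzeros n d) \<le> p"
  shows "l2norm_on Q (mat_vec n M d) \<le> sqrt (\<mu> * q * p) * l2norm_on {..<n} d"
proof -
  define P where "P = nonzeros n d"
  have bound_nonneg: "0 \<le> sqrt \<mu> * (sqrt p * l2norm_on {..<n} d)"
    using \<open>0 \<le> \<mu>\<close> by simp
  have entry: "cmod (mat_vec n M d i) \<le> sqrt \<mu> * (sqrt p * l2norm_on {..<n} d)" if "i \<in> Q" for i
  proof -
    have "mat_vec n M d i = (\<Sum>l\<in>P. M i l * d l)"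
      unfolding mat_vec_def P_def nonzeros_def by (rule sum.mono_neutral_right) auto
    also have "cmod \<dots> \<le> (\<Sum>l\<in>P. sqrt \<mu> * cmod (d l))"
    proof (rule order_trans[OF norm_sum], rule sum_mono)
      fix l assume "l \<in> P"
      then have "cmod (M i l) \<le> sqrt \<mu>"
        using coh Q \<open>i \<in> Q\<close> by (auto simp: P_def nonzeros_def real_le_rsqrt)
      then show "cmod (M i l * d l) \<le> sqrt \<mu> * cmod (d l)"
        by (simp add: norm_mult mult_right_mono)
    qed
    also have "\<dots> \<le> sqrt \<mu> * (sqrt (card P) * l2norm_on P d)"
      unfolding sum_distrib_left[symmetric] using \<open>0 \<le> \<mu>\<close>
      by (intro mult_left_mono sum_cmod_le_sqrt_card) auto
    also have "\<dots> \<le> sqrt \<mu> * (sqrt p * l2norm_on {..<n} d)"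
      using P l2norm_on_subset_le[OF finite_lessThan nonzeros_subset] \<open>0 \<le> \<mu>\<close>
      by (intro mult_left_mono mult_mono) (auto simp: P_def)
    finally show ?thesis .
  qed
  have "l2norm_on Q (mat_vec n M d) \<le> sqrt (card Q) * (sqrt \<mu> * (sqrt p * l2norm_on {..<n} d))"
    using entry bound_nonneg by (rule l2norm_on_le_const)
  also have "\<dots> \<le> sqrt q * (sqrt \<mu> * (sqrt p * l2norm_on {..<n} d))"
    using Q bound_nonneg by (intro mult_right_mono) auto
  finally show ?thesis by (simp add: real_sqrt_mult mult_ac)
qed

lemma le_of_le_mult_of_square_le:
  fixes S w v K :: real
  assumes "0 \<le> S" "0 \<le> K" "S \<le> w * v" "w\<^sup>2 \<le> K * S"
  shows "S \<le> K * v\<^sup>2"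
proof (cases "S = 0")
  case False
  have "S * S \<le> (w * v)\<^sup>2" using assms by (simp add: power2_eq_square mult_mono')
  also have "\<dots> = w\<^sup>2 * v\<^sup>2" by (simp add: power_mult_distrib)
  also have "\<dots> \<le> K * S * v\<^sup>2" using assms by (simp add: mult_right_mono)
  finally show ?thesis using assms False by (simp add: mult_ac)
qed (use assms in simp)

locale incoherent_unitary =
  fixes n :: nat and F :: "nat \<Rightarrow> nat \<Rightarrow> complex" and \<mu> :: real
  assumes unitary: "unitary_mat n F"
    and coherence: "\<forall>i<n. \<forall>j<n. (cmod (F i j))\<^sup>2 \<le> \<mu>"
    and coherence_nonneg: "0 \<le> \<mu>"
begin

lemma coherence_adj: "\<forall>i<n. \<forall>j<n. (cmod (adj F i j))\<^sup>2 \<le> \<mu>"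
  using coherence by (simp add: adj_def)

lemma norm_square_mat_vec_add_sparse_le:
  assumes a: "card (nonzeros n a) \<le> p" and b: "card (nonzeros n b) \<le> q"
  shows "(l2norm_on {..<n} (\<lambda>r. mat_vec n F a r + b r))\<^sup>2
     \<le> (1 + sqrt (\<mu> * q * p)) * ((l2norm_on {..<n} a)\<^sup>2 + (l2norm_on {..<n} b)\<^sup>2)"
proof -
  define \<delta> where "\<delta> = sqrt (\<mu> * q * p)"
  define s1 where "s1 = l2norm_on {..<n} a"
  define s2 where "s2 = l2norm_on {..<n} b"
  let ?cross = "\<Sum>r<n. cnj (mat_vec n F a r) * b r"
  have "?cross = (\<Sum>r\<in>nonzeros n b. cnj (mat_vec n F a r) * b r)"
    unfolding nonzeros_def by (rule sum.mono_neutral_right) auto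
  then have "Re ?cross \<le> l2norm_on (nonzeros n b) (mat_vec n F a) * l2norm_on (nonzeros n b) b"
    by (metis complex_Re_le_cmod order_trans cmod_sum_cnj_mult_le)
  also have "\<dots> \<le> \<delta> * s1 * s2"
    using incoherent_mat_vec_bound[OF coherence coherence_nonneg nonzeros_subset b a]
      l2norm_on_subset_le[OF finite_lessThan nonzeros_subset] coherence_nonneg
    by (intro mult_mono) (auto simp: \<delta>_def s1_def s2_def)
  finally have cross: "Re ?cross \<le> \<delta> * s1 * s2" .
  have "(l2norm_on {..<n} (\<lambda>r. mat_vec n F a r + b r))\<^sup>2
      = (l2norm_on {..<n} (mat_vec n F a))\<^sup>2 + s2\<^sup>2 + 2 * Re ?cross"
    by (simp add: l2norm_on_square cmod_add_square s2_def sum.distrib sum_distrib_left Re_sum)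
  also have "l2norm_on {..<n} (mat_vec n F a) = s1"
    unfolding s1_def by (rule unitary_l2norm_mat_vec[OF unitary])
  also have "s1\<^sup>2 + s2\<^sup>2 + 2 * Re ?cross \<le> s1\<^sup>2 + s2\<^sup>2 + \<delta> * (2 * s1 * s2)"
    using cross by simp
  also have "\<dots> \<le> (1 + \<delta>) * (s1\<^sup>2 + s2\<^sup>2)"
    using mult_left_mono[OF sum_squares_bound[of s1 s2], of \<delta>] coherence_nonneg
    by (simp add: \<delta>_def algebra_simps)
  finally show ?thesis by (simp add: \<delta>_def s1_def s2_def)
qed

(* With N1, N2 the two restricted vectors, the left-hand side is the inner product of
   F N1 + N2 with v; Cauchy-Schwarz and the sparse bound on F N1 + N2 give the claim. *)
lemma norm_square_adj_restrict_le:
  assumes T1: "T1 \<subseteq> {..<n}" "card T1 \<le> p" and T2: "T2 \<subseteq> {..<n}" "card T2 \<le> q"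
  shows "(l2norm_on T1 (mat_vec n (adj F) v))\<^sup>2 + (l2norm_on T2 v)\<^sup>2
     \<le> (1 + sqrt (\<mu> * q * p)) * (l2norm_on {..<n} v)\<^sup>2"
proof -
  define N1 where "N1 = coord_proj T1 (mat_vec n (adj F) v)"
  define N2 where "N2 = coord_proj T2 v"
  define W where "W = (\<lambda>r. mat_vec n F N1 r + N2 r)"
  define S where "S = (l2norm_on T1 (mat_vec n (adj F) v))\<^sup>2 + (l2norm_on T2 v)\<^sup>2"
  have N1: "l2norm_on {..<n} N1 = l2norm_on T1 (mat_vec n (adj F) v)"
    unfolding N1_def using T1 by (intro l2norm_on_coord_proj) auto
  have N2: "l2norm_on {..<n} N2 = l2norm_on T2 v"
    unfolding N2_def using T2 by (intro l2norm_on_coord_proj) auto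
  have "complex_of_real S = (\<Sum>i<n. cnj (N1 i) * mat_vec n (adj F) v i) + (\<Sum>r<n. cnj (N2 r) * v r)"
    unfolding S_def of_real_add N1[symmetric] N2[symmetric] of_real_l2norm_on_square
    by (auto simp: N1_def N2_def coord_proj_def intro!: sum.cong arg_cong2[where f = "(+)"])
  also have "\<dots> = (\<Sum>r<n. cnj (W r) * v r)"
    by (simp add: W_def sum_cnj_mat_vec_adj[symmetric] sum.distrib[symmetric] algebra_simps)
  finally have "S \<le> l2norm_on {..<n} W * l2norm_on {..<n} v"
    by (metis Re_complex_of_real complex_Re_le_cmod order_trans cmod_sum_cnj_mult_le)
  moreover have "(l2norm_on {..<n} W)\<^sup>2 \<le> (1 + sqrt (\<mu> * q * p)) * S"
    unfolding W_def S_def N1[symmetric] N2[symmetric]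
  proof (rule norm_square_mat_vec_add_sparse_le)
    show "card (nonzeros n N1) \<le> p"
      using le_trans[OF card_nonzeros_coord_proj_le[OF finite_subset[OF T1(1) finite_lessThan]] T1(2)]
      by (simp add: N1_def)
    show "card (nonzeros n N2) \<le> q"
      using le_trans[OF card_nonzeros_coord_proj_le[OF finite_subset[OF T2(1) finite_lessThan]] T2(2)]
      by (simp add: N2_def)
  qed
  ultimately show ?thesis
    using coherence_nonneg by (intro le_of_le_mult_of_square_le) (auto simp: S_def)
qed

lemma l2norm_on_adj_le:
  assumes "T \<subseteq> {..<n}"
  shows "l2norm_on T (mat_vec n (adj F) v) \<le> l2norm_on {..<n} v"
  using norm_square_adj_restrict_le[OF assms order_refl empty_subsetI, of 0 v]
  by (simp add: l2norm_on_def power2_le_iff_abs_le)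

end

section \<open>Hard thresholding\<close>

lemma sum_le_sum_if_dominated:
  fixes f :: "nat \<Rightarrow> real"
  assumes "finite B" "card A \<le> card B" "\<And>a b. a \<in> A \<Longrightarrow> b \<in> B \<Longrightarrow> f a \<le> f b"
    and "\<And>b. b \<in> B \<Longrightarrow> 0 \<le> f b"
  shows "sum f A \<le> sum f B"
proof (cases "B = {}")
  case False
  define m where "m = Min (f ` B)"
  have m_nonneg: "0 \<le> m" using assms False by (simp add: m_def)
  have "sum f A \<le> sum (\<lambda>_. m) A"
    using assms False by (intro sum_mono) (auto simp: m_def)
  also have "\<dots> \<le> real (card B) * m"
    using assms m_nonneg by (simp add: mult_right_mono)
  also have "\<dots> \<le> sum f B"
    using assms by (simp add: sum_bounded_below m_def)
  finally show ?thesis .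
qed (use assms in \<open>auto simp: card_eq_0_iff\<close>)

locale hard_thresholding =
  fixes n :: nat and sel :: "(nat \<Rightarrow> complex) \<Rightarrow> nat \<Rightarrow> nat set"
  assumes thr_rule: "thr_rule n sel"
begin

lemma sel_subset: "sel x k \<subseteq> {..<n}"
  using thr_rule unfolding thr_rule_def by blast

lemma card_sel: "card (sel x k) = min k n"
  using thr_rule unfolding thr_rule_def by blast

lemma sel_dominates: "i \<in> sel x k \<Longrightarrow> j < n \<Longrightarrow> j \<notin> sel x k \<Longrightarrow> cmod (x j) \<le> cmod (x i)"
  using thr_rule unfolding thr_rule_def by blast

lemma finite_sel [simp]: "finite (sel x k)"
  using finite_subset[OF sel_subset] by simp

lemma hk_eq_coord_proj: "hk sel k x = coord_proj (sel x k) x"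
  unfolding hk_def coord_proj_def by simp

lemma l2norm_on_hk: "l2norm_on {..<n} (hk sel k x) = l2norm_on (sel x k) x"
  unfolding hk_eq_coord_proj by (rule l2norm_on_coord_proj[OF finite_lessThan sel_subset])

lemma nonzeros_hk_subset: "nonzeros n (hk sel k x) \<subseteq> sel x k"
  unfolding hk_eq_coord_proj by (rule nonzeros_coord_proj_subset)

lemma card_nonzeros_hk_le: "card (nonzeros n (hk sel k x)) \<le> k"
  using card_mono[OF finite_sel nonzeros_hk_subset] card_sel by (metis min.bounded_iff)

lemma card_sel_Un_le: "card (sel x k \<union> sel x' k) \<le> 2 * k"
  using card_Un_le[of "sel x k" "sel x' k"] card_sel[of x k] card_sel[of x' k] by linarith

lemma sum_outside_sel_le:
  assumes "S \<subseteq> {..<n}" "card S \<le> min k n"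
  shows "(\<Sum>i\<in>S - sel u k. (cmod (u i))\<^sup>2) \<le> (\<Sum>i\<in>sel u k - S. (cmod (u i))\<^sup>2)"
proof (rule sum_le_sum_if_dominated)
  have "finite S" using assms finite_subset by blast
  then show "card (S - sel u k) \<le> card (sel u k - S)"
    using assms card_sel[of u k] by (simp add: card_Diff_subset_Int Int_commute diff_le_mono)
  show "(cmod (u a))\<^sup>2 \<le> (cmod (u b))\<^sup>2" if "a \<in> S - sel u k" "b \<in> sel u k - S" for a b
    using that assms sel_dominates[of b u k a] by (auto intro: power_mono)
qed auto

lemma norm_square_hk_diff_eq:
  assumes S: "S \<subseteq> {..<n}" and z: "nonzeros n z \<subseteq> S"
  shows "(l2norm_on {..<n} (\<lambda>i. hk sel k u i - z i))\<^sup>2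
     = (\<Sum>i\<in>sel u k. (cmod (u i - z i))\<^sup>2) + (\<Sum>i\<in>S - sel u k. (cmod (z i))\<^sup>2)"
proof -
  have fin: "finite S" using S finite_subset by auto
  have hk: "hk sel k u i = (if i \<in> sel u k then u i else 0)" for i by (simp add: hk_def)
  have "(l2norm_on {..<n} (\<lambda>i. hk sel k u i - z i))\<^sup>2
      = (\<Sum>i\<in>sel u k \<union> (S - sel u k). (cmod (hk sel k u i - z i))\<^sup>2)"
    unfolding l2norm_on_square
    by (rule sum.mono_neutral_right) (use S z sel_subset in \<open>auto simp: hk nonzeros_def\<close>)
  also have "\<dots> = (\<Sum>i\<in>sel u k. (cmod (hk sel k u i - z i))\<^sup>2)
      + (\<Sum>i\<in>S - sel u k. (cmod (hk sel k u i - z i))\<^sup>2)"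
    by (rule sum.union_disjoint) (use fin in auto)
  finally show ?thesis by (auto simp: hk intro!: sum.cong arg_cong2[where f = "(+)"])
qed

(* Only the entries of u - z on the two supports matter: the entries of z that thresholding
   discards are paid for by the kept entries of u outside supp z, which are at least as large. *)
lemma hk_error_le:
  assumes S: "S \<subseteq> {..<n}" "card S \<le> min k n" and z: "nonzeros n z \<subseteq> S"
  shows "l2norm_on {..<n} (\<lambda>i. hk sel k u i - z i) \<le> sqrt 3 * l2norm_on (S \<union> sel u k) (\<lambda>i. u i - z i)"
proof -
  define S' where "S' = sel u k"
  define g where "g i = (cmod (u i - z i))\<^sup>2" for i
  have fin: "finite S" "finite S'" using S finite_subset by (auto simp: S'_def)
  have "(l2norm_on {..<n} (\<lambda>i. hk sel k u i - z i))\<^sup>2 = sum g S' + (\<Sum>i\<in>S - S'. (cmod (z i))\<^sup>2)"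
    unfolding norm_square_hk_diff_eq[OF S(1) z] by (simp add: S'_def g_def)
  also have "(\<Sum>i\<in>S - S'. (cmod (z i))\<^sup>2) \<le> (\<Sum>i\<in>S - S'. 2 * g i + 2 * (cmod (u i))\<^sup>2)"
    unfolding g_def by (rule sum_mono) (rule cmod_square_le_diff)
  also have "\<dots> = 2 * sum g (S - S') + 2 * (\<Sum>i\<in>S - S'. (cmod (u i))\<^sup>2)"
    by (simp add: sum.distrib sum_distrib_left)
  also have "(\<Sum>i\<in>S - S'. (cmod (u i))\<^sup>2) \<le> (\<Sum>i\<in>S' - S. (cmod (u i))\<^sup>2)"
    using sum_outside_sel_le[OF S] by (simp add: S'_def)
  also have "\<dots> = sum g (S' - S)"
    by (rule sum.cong) (use sel_subset[of u k] z in \<open>auto simp: S'_def g_def nonzeros_def\<close>)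
  also have "sum g (S' - S) \<le> sum g S'"
    using fin by (intro sum_mono2) (auto simp: g_def)
  finally have "(l2norm_on {..<n} (\<lambda>i. hk sel k u i - z i))\<^sup>2 \<le> 3 * (sum g S' + sum g (S - S'))"
    using sum_nonneg[of "S - S'" g] by (simp add: g_def)
  also have "sum g S' + sum g (S - S') = (l2norm_on (S \<union> S') (\<lambda>i. u i - z i))\<^sup>2"
    using fin by (simp add: l2norm_on_square g_def sum.union_disjoint[symmetric] Un_commute)
  finally have "(l2norm_on {..<n} (\<lambda>i. hk sel k u i - z i))\<^sup>2
      \<le> 3 * (l2norm_on (S \<union> S') (\<lambda>i. u i - z i))\<^sup>2" .
  from real_le_rsqrt[OF this] show ?thesis by (simp add: S'_def real_sqrt_mult)
qed

end

section \<open>The IHT iteration for A = [F I]\<close>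

lemma mat_vec_block_FI:
  assumes "r < n"
  shows "mat_vec (2 * n) (block_FI n F) x r = mat_vec n F x r + x (n + r)"
proof -
  have "mat_vec (2 * n) (block_FI n F) x r
      = (\<Sum>j<2 * n. if j < n then F r j * x j else 0) + (\<Sum>j<2 * n. if j = n + r then x j else 0)"
    unfolding mat_vec_def sum.distrib[symmetric] by (intro sum.cong) (auto simp: block_FI_def)
  also have "(\<Sum>j<2 * n. if j < n then F r j * x j else 0) = mat_vec n F x r"
    unfolding mat_vec_def by (rule sum.mono_neutral_cong_right) auto
  finally show ?thesis using assms by simp
qed

lemma mat_vec_adj_block_FI_upper: "i < n \<Longrightarrow> mat_vec n (adj (block_FI n F)) v i = mat_vec n (adj F) v i"
  by (simp add: mat_vec_def adj_def block_FI_def)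

lemma mat_vec_adj_block_FI_lower:
  assumes "j < n"
  shows "mat_vec n (adj (block_FI n F)) v (n + j) = v j"
proof -
  have "mat_vec n (adj (block_FI n F)) v (n + j) = (\<Sum>r<n. if r = j then v r else 0)"
    unfolding mat_vec_def adj_def block_FI_def by (intro sum.cong) auto
  then show ?thesis using assms by simp
qed

lemma hkt_upper: "j < n \<Longrightarrow> hkt n sel k t z j = hk sel k z j"
  by (simp add: hkt_def)

lemma hkt_lower: "j < n \<Longrightarrow> hkt n sel k t z (n + j) = hk sel t (\<lambda>j. z (n + j)) j"
  by (simp add: hkt_def)

definition iht_proxy :: "nat \<Rightarrow> (nat \<Rightarrow> nat \<Rightarrow> complex) \<Rightarrow> (nat \<Rightarrow> complex) \<Rightarrow> (nat \<Rightarrow> complex) \<Rightarrow>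
    nat \<Rightarrow> complex" where
  "iht_proxy n F y x =
     (\<lambda>i. x i + mat_vec n (adj (block_FI n F)) (\<lambda>r. y r - mat_vec (2 * n) (block_FI n F) x r) i)"

lemma iht_step_block_FI: "iht_step n sel y (block_FI n F) k t x = hkt n sel k t (iht_proxy n F y x)"
  by (simp add: iht_step_def iht_proxy_def)

lemma iht_proxy_upper:
  assumes "unitary_mat n F" "j < n"
  shows "iht_proxy n F (\<lambda>r. mat_vec n F s r + w r) x j = s j + mat_vec n (adj F) (\<lambda>r. w r - x (n + r)) j"
proof -
  have "mat_vec n (adj F) (\<lambda>r. mat_vec n F s r + w r - mat_vec (2 * n) (block_FI n F) x r)
      = mat_vec n (adj F) (\<lambda>r. mat_vec n F (\<lambda>l. s l - x l) r + (w r - x (n + r)))"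
    by (rule mat_vec_cong) (simp add: mat_vec_block_FI mat_vec_diff)
  then have "iht_proxy n F (\<lambda>r. mat_vec n F s r + w r) x j
      = x j + mat_vec n (adj F) (\<lambda>r. mat_vec n F (\<lambda>l. s l - x l) r + (w r - x (n + r))) j"
    by (simp add: iht_proxy_def mat_vec_adj_block_FI_upper[OF assms(2)])
  also have "\<dots> = s j + mat_vec n (adj F) (\<lambda>r. w r - x (n + r)) j"
    using unitary_mat_vec_adj_mat_vec[OF assms] by (simp add: mat_vec_add)
  finally show ?thesis .
qed

lemma iht_proxy_lower:
  assumes "j < n"
  shows "iht_proxy n F (\<lambda>r. mat_vec n F s r + w r) x (n + j) = mat_vec n F (\<lambda>l. s l - x l) j + w j"
  using assms unfolding iht_proxy_def mat_vec_adj_block_FI_lower[OF assms] mat_vec_block_FI[OF assms]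
  by (simp add: mat_vec_diff)

definition iht_iterate :: "nat \<Rightarrow> ((nat \<Rightarrow> complex) \<Rightarrow> nat \<Rightarrow> nat set) \<Rightarrow> (nat \<Rightarrow> complex) \<Rightarrow>
    (nat \<Rightarrow> nat \<Rightarrow> complex) \<Rightarrow> nat \<Rightarrow> nat \<Rightarrow> nat \<Rightarrow> nat \<Rightarrow> complex" where
  "iht_iterate n sel y A k t i = (iht_step n sel y A k t ^^ i) (\<lambda>_. 0)"

lemma iht_iterate_0: "iht_iterate n sel y A k t 0 = (\<lambda>_. 0)"
  by (simp add: iht_iterate_def)

lemma iht_iterate_Suc:
  "iht_iterate n sel y A k t (Suc i) = iht_step n sel y A k t (iht_iterate n sel y A k t i)"
  by (simp add: iht_iterate_def)

lemma IHT_eq_iht_iterate: "IHT n sel y A k t T = iht_iterate n sel y A k t (Suc T)"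
  by (simp add: IHT_def iht_iterate_def)

context hard_thresholding
begin

lemma card_nonzeros_iht_iterate_upper: "card (nonzeros n (iht_iterate n sel y A k t i)) \<le> k"
proof (cases i)
  case (Suc i')
  then show ?thesis
    using card_nonzeros_hk_le
    by (simp add: iht_iterate_Suc iht_step_def nonzeros_cong[OF hkt_upper])
qed (simp add: iht_iterate_0 nonzeros_def)

lemma card_nonzeros_iht_iterate_lower: "card (nonzeros n (\<lambda>j. iht_iterate n sel y A k t i (n + j))) \<le> t"
proof (cases i)
  case (Suc i')
  then show ?thesis
    using card_nonzeros_hk_le
    by (simp add: iht_iterate_Suc iht_step_def nonzeros_cong[OF hkt_lower])
qed (simp add: iht_iterate_0 nonzeros_def)

end

section \<open>Error analysis\<close>

lemma coupled_error_bound: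
  fixes D G D' G' p1 p2 \<delta> N :: real
  assumes nonneg: "0 \<le> \<delta>" "0 \<le> D'" "0 \<le> G'" "0 \<le> N"
    and D': "D' \<le> sqrt 3 * (\<delta> * G + p1)" and G': "G' \<le> sqrt 3 * (\<delta> * D + p2)"
    and p: "p1\<^sup>2 + p2\<^sup>2 \<le> (1 + \<delta>) * N\<^sup>2"
  shows "sqrt (D'\<^sup>2 + G'\<^sup>2) \<le> sqrt 3 * (\<delta> * sqrt (D\<^sup>2 + G\<^sup>2) + sqrt (1 + \<delta>) * N)"
proof -
  have "sqrt (D'\<^sup>2 + G'\<^sup>2) \<le> sqrt ((sqrt 3 * (\<delta> * G + p1))\<^sup>2 + (sqrt 3 * (\<delta> * D + p2))\<^sup>2)"
    using nonneg D' G' by (intro real_sqrt_le_mono add_mono power_mono) auto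
  also have "\<dots> = sqrt 3 * sqrt ((\<delta> * G + p1)\<^sup>2 + (\<delta> * D + p2)\<^sup>2)"
    unfolding power_mult_distrib real_sqrt_pow2[OF zero_le_numeral]
    by (simp only: distrib_left[symmetric] real_sqrt_mult)
  also have "sqrt ((\<delta> * G + p1)\<^sup>2 + (\<delta> * D + p2)\<^sup>2)
      \<le> sqrt ((\<delta> * G)\<^sup>2 + (\<delta> * D)\<^sup>2) + sqrt (p1\<^sup>2 + p2\<^sup>2)"
    by (rule real_sqrt_sum_squares_triangle_ineq)
  also have "sqrt ((\<delta> * G)\<^sup>2 + (\<delta> * D)\<^sup>2) = \<delta> * sqrt (D\<^sup>2 + G\<^sup>2)"
  proof -
    have "(\<delta> * G)\<^sup>2 + (\<delta> * D)\<^sup>2 = \<delta>\<^sup>2 * (D\<^sup>2 + G\<^sup>2)"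
      by (simp add: power_mult_distrib algebra_simps)
    then show ?thesis using nonneg by (simp add: real_sqrt_mult)
  qed
  also have "sqrt (p1\<^sup>2 + p2\<^sup>2) \<le> sqrt (1 + \<delta>) * N"
    using real_sqrt_le_mono[OF p] nonneg by (simp add: real_sqrt_mult)
  finally show ?thesis by simp
qed

lemma le_geometric_if_recurrence:
  fixes a :: "nat \<Rightarrow> real"
  assumes "0 \<le> \<rho>" "0 \<le> C" "a 0 \<le> R" "\<And>i. a (Suc i) \<le> \<rho> * a i + (1 - \<rho>) * C"
  shows "a i \<le> \<rho> ^ i * R + C"
proof (induction i)
  case (Suc i)
  have "a (Suc i) \<le> \<rho> * (\<rho> ^ i * R + C) + (1 - \<rho>) * C"
    using assms(4)[of i] mult_left_mono[OF Suc assms(1)] by linarith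
  then show ?case by (simp add: algebra_simps)
qed (use assms in simp)

locale iht_recovery = incoherent_unitary n F \<mu> + hard_thresholding n sel
  for n :: nat and F :: "nat \<Rightarrow> nat \<Rightarrow> complex" and \<mu> :: real
    and sel :: "(nat \<Rightarrow> complex) \<Rightarrow> nat \<Rightarrow> nat set" +
  fixes xhat e :: "nat \<Rightarrow> complex" and k t :: nat
begin

abbreviation "xhat_head \<equiv> hk sel k xhat"
abbreviation "xhat_tail \<equiv> tk sel k xhat"
abbreviation "measurement \<equiv> \<lambda>r. mat_vec n F xhat r + e r"
abbreviation "eff_noise \<equiv> \<lambda>r. mat_vec n F xhat_tail r + e r"
abbreviation "proxy \<equiv> iht_proxy n F measurement"
abbreviation "step \<equiv> iht_step n sel measurement (block_FI n F) k t"
abbreviation "iterate \<equiv> iht_iterate n sel measurement (block_FI n F) k t"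

lemma measurement_split: "measurement = (\<lambda>r. mat_vec n F xhat_head r + eff_noise r)"
proof -
  have "xhat = (\<lambda>l. xhat_head l + xhat_tail l)" by (simp add: tk_def)
  then have "mat_vec n F xhat = (\<lambda>r. mat_vec n F xhat_head r + mat_vec n F xhat_tail r)"
    by (metis mat_vec_add)
  then show ?thesis by (simp add: add.assoc)
qed

lemma proxy_upper: "j < n \<Longrightarrow> proxy x j = xhat_head j + mat_vec n (adj F) (\<lambda>r. eff_noise r - x (n + r)) j"
  unfolding measurement_split by (rule iht_proxy_upper[OF unitary])

lemma proxy_lower: "j < n \<Longrightarrow> proxy x (n + j) = mat_vec n F (\<lambda>l. xhat_head l - x l) j + eff_noise j"
  unfolding measurement_split by (rule iht_proxy_lower)

lemma step_upper: "j < n \<Longrightarrow> step x j = hk sel k (proxy x) j"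
  by (simp add: iht_step_block_FI hkt_upper)

lemma step_lower: "j < n \<Longrightarrow> step x (n + j) = hk sel t (\<lambda>j. proxy x (n + j)) j"
  by (simp add: iht_step_block_FI hkt_lower)

lemma step_upper_error_le:
  "l2norm_on {..<n} (\<lambda>j. step x j - xhat_head j)
     \<le> sqrt 3 * l2norm_on (sel xhat k \<union> sel (proxy x) k) (mat_vec n (adj F) (\<lambda>r. eff_noise r - x (n + r)))"
proof -
  have "l2norm_on {..<n} (\<lambda>j. step x j - xhat_head j) = l2norm_on {..<n} (\<lambda>j. hk sel k (proxy x) j - xhat_head j)"
    by (rule l2norm_on_cong) (simp add: step_upper)
  also have "\<dots> \<le> sqrt 3 * l2norm_on (sel xhat k \<union> sel (proxy x) k) (\<lambda>j. proxy x j - xhat_head j)"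
    by (rule hk_error_le[OF sel_subset _ nonzeros_hk_subset]) (simp add: card_sel)
  also have "l2norm_on (sel xhat k \<union> sel (proxy x) k) (\<lambda>j. proxy x j - xhat_head j)
      = l2norm_on (sel xhat k \<union> sel (proxy x) k) (mat_vec n (adj F) (\<lambda>r. eff_noise r - x (n + r)))"
    by (rule l2norm_on_cong)
       (use sel_subset[of xhat k] sel_subset[of "proxy x" k] in \<open>auto simp: proxy_upper\<close>)
  finally show ?thesis .
qed

lemma step_upper_error_le_dense_noise:
  assumes "card (nonzeros n (\<lambda>j. x (n + j))) \<le> t"
  shows "l2norm_on {..<n} (\<lambda>j. step x j - xhat_head j)
     \<le> sqrt 3 * (l2norm_on {..<n} eff_noise + sqrt (\<mu> * (2 * k) * t) * l2norm_on {..<n} (\<lambda>j. x (n + j)))"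
proof -
  let ?T = "sel xhat k \<union> sel (proxy x) k"
  have T: "?T \<subseteq> {..<n}" using sel_subset by auto
  have "l2norm_on ?T (mat_vec n (adj F) (\<lambda>r. eff_noise r - x (n + r)))
      \<le> l2norm_on ?T (mat_vec n (adj F) eff_noise) + l2norm_on ?T (mat_vec n (adj F) (\<lambda>r. x (n + r)))"
    unfolding mat_vec_diff by (rule l2norm_on_diff_le)
  also have "\<dots> \<le> l2norm_on {..<n} eff_noise + sqrt (\<mu> * (2 * k) * t) * l2norm_on {..<n} (\<lambda>j. x (n + j))"
    using l2norm_on_adj_le[OF T]
      incoherent_mat_vec_bound[OF coherence_adj coherence_nonneg T card_sel_Un_le assms]
    by (intro add_mono) simp_all
  finally show ?thesis
    by (intro order_trans[OF step_upper_error_le] mult_left_mono) simp_all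
qed

lemma step_lower_le_dense_noise:
  assumes "card (nonzeros n x) \<le> k"
  shows "l2norm_on {..<n} (\<lambda>j. step x (n + j))
     \<le> sqrt (\<mu> * t * (2 * k)) * l2norm_on {..<n} (\<lambda>j. x j - xhat_head j) + l2norm_on {..<n} eff_noise"
proof -
  let ?S = "sel (\<lambda>j. proxy x (n + j)) t"
  have S: "?S \<subseteq> {..<n}" "card ?S \<le> t" using sel_subset card_sel by auto
  have "l2norm_on {..<n} (\<lambda>j. step x (n + j)) = l2norm_on {..<n} (hk sel t (\<lambda>j. proxy x (n + j)))"
    by (rule l2norm_on_cong) (simp add: step_lower)
  also have "\<dots> = l2norm_on ?S (\<lambda>j. mat_vec n F (\<lambda>l. xhat_head l - x l) j + eff_noise j)"
    unfolding l2norm_on_hk by (rule l2norm_on_cong) (use S in \<open>auto simp: proxy_lower\<close>)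
  also have "\<dots> \<le> l2norm_on ?S (mat_vec n F (\<lambda>l. xhat_head l - x l)) + l2norm_on ?S eff_noise"
    by (rule l2norm_on_add_le)
  also have "\<dots> \<le> sqrt (\<mu> * t * (2 * k)) * l2norm_on {..<n} (\<lambda>l. xhat_head l - x l) + l2norm_on {..<n} eff_noise"
    using incoherent_mat_vec_bound[OF coherence coherence_nonneg S
        card_nonzeros_diff_le[OF card_nonzeros_hk_le[of k xhat] assms, unfolded mult_2[symmetric]]]
      l2norm_on_subset_le[OF finite_lessThan S(1)]
    by (intro add_mono) simp_all
  finally show ?thesis unfolding l2norm_on_minus_commute[of "{..<n}" xhat_head x] .
qed

lemma step_upper_error_le_sparse_noise:
  assumes b: "card (nonzeros n (\<lambda>j. x (n + j))) \<le> t" and e: "card (nonzeros n e) \<le> t"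
  shows "l2norm_on {..<n} (\<lambda>j. step x j - xhat_head j)
     \<le> sqrt 3 * (sqrt (\<mu> * (2 * k) * (2 * t)) * l2norm_on {..<n} (\<lambda>j. x (n + j) - e j)
       + l2norm_on (sel xhat k \<union> sel (proxy x) k) (mat_vec n (adj F) (mat_vec n F xhat_tail)))"
proof -
  let ?T = "sel xhat k \<union> sel (proxy x) k"
  have T: "?T \<subseteq> {..<n}" using sel_subset by auto
  have split: "(\<lambda>r. eff_noise r - x (n + r)) = (\<lambda>r. (e r - x (n + r)) + mat_vec n F xhat_tail r)"
    by (simp add: fun_eq_iff algebra_simps)
  have "l2norm_on ?T (mat_vec n (adj F) (\<lambda>r. eff_noise r - x (n + r)))
      \<le> l2norm_on ?T (mat_vec n (adj F) (\<lambda>r. e r - x (n + r)))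
        + l2norm_on ?T (mat_vec n (adj F) (mat_vec n F xhat_tail))"
    unfolding split mat_vec_add by (rule l2norm_on_add_le)
  also have "l2norm_on ?T (mat_vec n (adj F) (\<lambda>r. e r - x (n + r)))
      \<le> sqrt (\<mu> * (2 * k) * (2 * t)) * l2norm_on {..<n} (\<lambda>j. x (n + j) - e j)"
    using incoherent_mat_vec_bound[OF coherence_adj coherence_nonneg T card_sel_Un_le
        card_nonzeros_diff_le[OF e b, unfolded mult_2[symmetric]]]
    unfolding l2norm_on_minus_commute[of "{..<n}" e "\<lambda>j. x (n + j)"] by simp
  finally show ?thesis
    by (intro order_trans[OF step_upper_error_le] mult_left_mono) simp_all
qed

lemma step_lower_error_le_sparse_noise:
  assumes a: "card (nonzeros n x) \<le> k" and e: "card (nonzeros n e) \<le> t"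
  shows "l2norm_on {..<n} (\<lambda>j. step x (n + j) - e j)
     \<le> sqrt 3 * (sqrt (\<mu> * (2 * k) * (2 * t)) * l2norm_on {..<n} (\<lambda>j. x j - xhat_head j)
       + l2norm_on (nonzeros n e \<union> sel (\<lambda>j. proxy x (n + j)) t) (mat_vec n F xhat_tail))"
proof -
  let ?u = "\<lambda>j. proxy x (n + j)"
  let ?T = "nonzeros n e \<union> sel ?u t"
  have T: "?T \<subseteq> {..<n}" "card ?T \<le> 2 * t"
    using nonzeros_subset sel_subset card_Un_le[of "nonzeros n e" "sel ?u t"] e card_sel[of ?u t]
    by auto
  have "l2norm_on {..<n} (\<lambda>j. step x (n + j) - e j) = l2norm_on {..<n} (\<lambda>j. hk sel t ?u j - e j)"
    by (rule l2norm_on_cong) (simp add: step_lower)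
  also have "\<dots> \<le> sqrt 3 * l2norm_on ?T (\<lambda>j. ?u j - e j)"
    using e card_nonzeros_le[of n e] by (intro hk_error_le nonzeros_subset) auto
  also have "l2norm_on ?T (\<lambda>j. ?u j - e j)
      = l2norm_on ?T (\<lambda>j. mat_vec n F (\<lambda>l. xhat_head l - x l) j + mat_vec n F xhat_tail j)"
    by (rule l2norm_on_cong) (use T in \<open>auto simp: proxy_lower\<close>)
  also have "\<dots> \<le> l2norm_on ?T (mat_vec n F (\<lambda>l. xhat_head l - x l)) + l2norm_on ?T (mat_vec n F xhat_tail)"
    by (rule l2norm_on_add_le)
  also have "\<dots> \<le> sqrt (\<mu> * (2 * k) * (2 * t)) * l2norm_on {..<n} (\<lambda>j. x j - xhat_head j)
        + l2norm_on ?T (mat_vec n F xhat_tail)"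
    using incoherent_mat_vec_bound[OF coherence coherence_nonneg T
        card_nonzeros_diff_le[OF card_nonzeros_hk_le[of k xhat] a, unfolded mult_2[symmetric]]]
    unfolding l2norm_on_minus_commute[of "{..<n}" xhat_head x] by (simp add: mult_ac)
  finally show ?thesis by simp
qed

lemma tail_noise_square_le:
  assumes e: "card (nonzeros n e) \<le> t"
  shows "(l2norm_on (sel xhat k \<union> sel (proxy x) k) (mat_vec n (adj F) (mat_vec n F xhat_tail)))\<^sup>2
      + (l2norm_on (nonzeros n e \<union> sel (\<lambda>j. proxy x (n + j)) t) (mat_vec n F xhat_tail))\<^sup>2
     \<le> (1 + sqrt (\<mu> * (2 * k) * (2 * t))) * (l2norm_on {..<n} xhat_tail)\<^sup>2"
proof -
  let ?u = "\<lambda>j. proxy x (n + j)"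
  have T2: "nonzeros n e \<union> sel ?u t \<subseteq> {..<n}" "card (nonzeros n e \<union> sel ?u t) \<le> 2 * t"
    using nonzeros_subset sel_subset card_Un_le[of "nonzeros n e" "sel ?u t"] e card_sel[of ?u t]
    by auto
  have T1: "sel xhat k \<union> sel (proxy x) k \<subseteq> {..<n}" using sel_subset by auto
  from norm_square_adj_restrict_le[OF T1 card_sel_Un_le T2, of "mat_vec n F xhat_tail"]
  show ?thesis by (simp add: unitary_l2norm_mat_vec[OF unitary] mult_ac)
qed

lemma error_step_sparse_noise:
  assumes e: "card (nonzeros n e) \<le> t" and \<rho>: "\<rho> = sqrt 27 * sqrt (\<mu> * k * t)"
    and a: "card (nonzeros n x) \<le> k" and b: "card (nonzeros n (\<lambda>j. x (n + j))) \<le> t"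
  shows "sqrt ((l2norm_on {..<n} (\<lambda>j. step x j - xhat_head j))\<^sup>2
                + (l2norm_on {..<n} (\<lambda>j. step x (n + j) - e j))\<^sup>2)
     \<le> \<rho> * sqrt ((l2norm_on {..<n} (\<lambda>j. x j - xhat_head j))\<^sup>2
                   + (l2norm_on {..<n} (\<lambda>j. x (n + j) - e j))\<^sup>2)
       + sqrt 3 * sqrt (1 + 2 * sqrt (\<mu> * k * t)) * l2norm_on {..<n} xhat_tail"
    (is "?E' \<le> \<rho> * ?E + ?noise")
proof -
  have "\<mu> * (2 * k) * (2 * t) = 4 * (\<mu> * k * t)" by simp
  then have \<delta>: "sqrt (\<mu> * (2 * k) * (2 * t)) = 2 * sqrt (\<mu> * k * t)"
    by (simp only: real_sqrt_mult real_sqrt_four)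
  have "?E' \<le> sqrt 3 * (2 * sqrt (\<mu> * k * t) * ?E
                + sqrt (1 + 2 * sqrt (\<mu> * k * t)) * l2norm_on {..<n} xhat_tail)"
    using coupled_error_bound[OF _ _ _ _
        step_upper_error_le_sparse_noise[OF b e, unfolded \<delta>]
        step_lower_error_le_sparse_noise[OF a e, unfolded \<delta>]
        tail_noise_square_le[OF e, unfolded \<delta>]]
    by (simp add: coherence_nonneg)
  also have "\<dots> = sqrt 3 * 2 * sqrt (\<mu> * k * t) * ?E + ?noise"
    by (simp add: algebra_simps)
  also have "sqrt 3 * 2 * sqrt (\<mu> * k * t) \<le> \<rho>"
  proof -
    have "sqrt 3 * 2 = sqrt (3 * 4)" unfolding real_sqrt_mult by simp
    also have "\<dots> \<le> sqrt 27" by simp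
    finally show ?thesis using \<rho> coherence_nonneg by (simp add: mult_right_mono)
  qed
  finally show ?thesis by (simp add: mult_right_mono)
qed

lemma error_bound_sparse_noise:
  assumes e: "card (nonzeros n e) \<le> t"
    and \<rho>: "\<rho> = sqrt 27 * sqrt (\<mu> * k * t)" "\<rho> < 1"
  shows "l2norm_on {..<n} (\<lambda>j. iterate (Suc T) j - xhat_head j)
     \<le> \<rho> ^ (T + 1) * sqrt ((l2norm_on {..<n} xhat_head)\<^sup>2 + (l2norm_on {..<n} e)\<^sup>2)
       + sqrt 3 * sqrt (1 + 2 * sqrt (\<mu> * k * t)) / (1 - \<rho>) * l2norm_on {..<n} xhat_tail"
proof -
  define E where "E i = sqrt ((l2norm_on {..<n} (\<lambda>j. iterate i j - xhat_head j))\<^sup>2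
                              + (l2norm_on {..<n} (\<lambda>j. iterate i (n + j) - e j))\<^sup>2)" for i
  define \<tau> where "\<tau> = sqrt 3 * sqrt (1 + 2 * sqrt (\<mu> * k * t)) / (1 - \<rho>)"
  have \<rho>_nonneg: "0 \<le> \<rho>" using \<rho> coherence_nonneg by simp
  have \<tau>_nonneg: "0 \<le> \<tau>" using \<rho> coherence_nonneg by (simp add: \<tau>_def)
  have "(1 - \<rho>) * \<tau> = sqrt 3 * sqrt (1 + 2 * sqrt (\<mu> * k * t))" using \<rho> by (simp add: \<tau>_def)
  then have step: "E (Suc i) \<le> \<rho> * E i + (1 - \<rho>) * (\<tau> * l2norm_on {..<n} xhat_tail)" for i
    using error_step_sparse_noise[OF e \<rho>(1) card_nonzeros_iht_iterate_upper card_nonzeros_iht_iterate_lower]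
    by (simp add: E_def iht_iterate_Suc mult.assoc[symmetric])
  have "l2norm_on {..<n} (\<lambda>j. iterate (Suc T) j - xhat_head j) \<le> E (Suc T)"
    unfolding E_def by (rule real_sqrt_sum_squares_ge1)
  also have "E (Suc T) \<le> \<rho> ^ Suc T * E 0 + \<tau> * l2norm_on {..<n} xhat_tail"
    using step by (intro le_geometric_if_recurrence[OF \<rho>_nonneg mult_nonneg_nonneg[OF \<tau>_nonneg]]) simp_all
  also have "E 0 = sqrt ((l2norm_on {..<n} xhat_head)\<^sup>2 + (l2norm_on {..<n} e)\<^sup>2)"
    by (simp add: E_def iht_iterate_0)
  finally show ?thesis by (simp add: \<tau>_def)
qed

lemma l2norm_eff_noise_le: "l2norm_on {..<n} eff_noise \<le> l2norm_on {..<n} xhat_tail + l2norm_on {..<n} e"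
  using l2norm_on_add_le[of "{..<n}" "mat_vec n F xhat_tail" e]
  by (simp add: unitary_l2norm_mat_vec[OF unitary])

lemma error_step_dense_noise:
  assumes \<rho>: "\<rho> = 2 * sqrt 2 * sqrt (\<mu> * k * t)"
    and a: "card (nonzeros n x) \<le> k" and b: "card (nonzeros n (\<lambda>j. x (n + j))) \<le> t"
  defines "D \<equiv> l2norm_on {..<n} (\<lambda>j. x j - xhat_head j)"
    and "B \<equiv> l2norm_on {..<n} (\<lambda>j. x (n + j))"
    and "W \<equiv> l2norm_on {..<n} eff_noise"
  shows "max (l2norm_on {..<n} (\<lambda>j. step x j - xhat_head j)) (l2norm_on {..<n} (\<lambda>j. step x (n + j)))
     \<le> \<rho> * max D B + 2 * W"
proof -
  have \<rho>_nonneg: "0 \<le> \<rho>" using \<rho> coherence_nonneg by simp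
  have nonneg: "0 \<le> D" "0 \<le> B" "0 \<le> W" by (simp_all add: D_def B_def W_def)
  have \<delta>: "sqrt (\<mu> * (2 * k) * t) = \<rho> / 2" "sqrt (\<mu> * t * (2 * k)) = \<rho> / 2"
    using \<rho> by (simp_all add: real_sqrt_mult mult_ac)
  have sqrt3: "sqrt 3 \<le> 2" by (simp add: real_sqrt_le_iff')
  have "l2norm_on {..<n} (\<lambda>j. step x j - xhat_head j) \<le> sqrt 3 * (W + \<rho> / 2 * B)"
    using step_upper_error_le_dense_noise[OF b, unfolded \<delta>] by (simp add: D_def B_def W_def)
  also have "\<dots> \<le> 2 * W + \<rho> * B"
    using mult_right_mono[OF sqrt3, of W] mult_right_mono[OF sqrt3, of "\<rho> / 2 * B"] \<rho>_nonneg nonneg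
    unfolding distrib_left by simp
  also have "\<dots> \<le> \<rho> * max D B + 2 * W"
    using mult_left_mono[OF max.cobounded2[of B D] \<rho>_nonneg] by linarith
  finally have upper: "l2norm_on {..<n} (\<lambda>j. step x j - xhat_head j) \<le> \<rho> * max D B + 2 * W" .
  have "l2norm_on {..<n} (\<lambda>j. step x (n + j)) \<le> \<rho> / 2 * D + W"
    using step_lower_le_dense_noise[OF a, unfolded \<delta>] by (simp add: D_def W_def)
  also have "\<dots> \<le> \<rho> * max D B + 2 * W"
    using mult_left_mono[OF max.cobounded1[of D B] \<rho>_nonneg] mult_nonneg_nonneg[OF \<rho>_nonneg nonneg(1)]
      nonneg(3)
    by linarith
  finally show ?thesis using upper by simp
qed

lemma error_bound_dense_noise:
  assumes \<rho>: "\<rho> = 2 * sqrt 2 * sqrt (\<mu> * k * t)" "\<rho> < 1"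
  shows "l2norm_on {..<n} (\<lambda>j. iterate (Suc T) j - xhat_head j)
     \<le> \<rho> ^ (T + 1) * l2norm_on {..<n} xhat_head
       + 2 / (1 - \<rho>) * (l2norm_on {..<n} xhat_tail + l2norm_on {..<n} e)"
proof -
  define M where "M i = max (l2norm_on {..<n} (\<lambda>j. iterate i j - xhat_head j))
                            (l2norm_on {..<n} (\<lambda>j. iterate i (n + j)))" for i
  define W where "W = l2norm_on {..<n} eff_noise"
  define \<tau> where "\<tau> = 2 / (1 - \<rho>)"
  have \<rho>_nonneg: "0 \<le> \<rho>" using \<rho> coherence_nonneg by simp
  have \<tau>_nonneg: "0 \<le> \<tau>" using \<rho> by (simp add: \<tau>_def)
  have "(1 - \<rho>) * \<tau> = 2" using \<rho>(2) by (simp add: \<tau>_def field_simps)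
  then have step: "M (Suc i) \<le> \<rho> * M i + (1 - \<rho>) * (\<tau> * W)" for i
    using error_step_dense_noise[OF \<rho>(1) card_nonzeros_iht_iterate_upper card_nonzeros_iht_iterate_lower]
    by (simp add: M_def W_def iht_iterate_Suc mult.assoc[symmetric])
  have "l2norm_on {..<n} (\<lambda>j. iterate (Suc T) j - xhat_head j) \<le> M (Suc T)"
    unfolding M_def by simp
  also have "M (Suc T) \<le> \<rho> ^ Suc T * M 0 + \<tau> * W"
    using step by (intro le_geometric_if_recurrence[OF \<rho>_nonneg mult_nonneg_nonneg[OF \<tau>_nonneg]])
      (simp_all add: W_def)
  also have "M 0 = l2norm_on {..<n} xhat_head"
    by (simp add: M_def iht_iterate_0)
  also have "\<tau> * W \<le> \<tau> * (l2norm_on {..<n} xhat_tail + l2norm_on {..<n} e)"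
    unfolding W_def using l2norm_eff_noise_le \<tau>_nonneg by (rule mult_left_mono)
  finally show ?thesis by (simp add: \<tau>_def)
qed

end

lemma geometric_bound_imp_tolerance_bound:
  fixes \<rho> R K err :: real
  assumes bound: "\<rho> < 1 \<Longrightarrow> err \<le> \<rho> ^ (T + 1) * R + K" and "0 \<le> R"
  shows "0 < \<rho> \<and> \<rho> < 1 \<longrightarrow> err \<le> \<rho> ^ (T + 1) * R + K \<and>
     (\<forall>\<epsilon>. 0 < \<epsilon> \<and> \<epsilon> < 1 \<and> real T \<ge> (ln (1 / \<epsilon>) + ln R) / ln (1 / \<rho>) \<longrightarrow> err \<le> K + \<epsilon>)"
proof (intro impI conjI allI)
  assume \<rho>: "0 < \<rho> \<and> \<rho> < 1"
  then show err: "err \<le> \<rho> ^ (T + 1) * R + K" using bound by simp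
  fix \<epsilon> assume \<epsilon>: "0 < \<epsilon> \<and> \<epsilon> < 1 \<and> real T \<ge> (ln (1 / \<epsilon>) + ln R) / ln (1 / \<rho>)"
  have "\<rho> ^ (T + 1) * R \<le> \<epsilon>"
  proof (cases "R = 0")
    case False
    then have R: "0 < R" using \<open>0 \<le> R\<close> by simp
    have "ln (1 / \<epsilon>) + ln R \<le> real T * ln (1 / \<rho>)"
      using \<epsilon> \<rho> by (simp add: divide_le_eq)
    then have "ln (\<rho> ^ T * R) \<le> ln \<epsilon>"
      using \<epsilon> \<rho> R by (simp add: ln_mult ln_realpow ln_div)
    then have "\<rho> ^ T * R \<le> \<epsilon>" using \<epsilon> \<rho> R by simp
    moreover have "\<rho> ^ (T + 1) * R \<le> \<rho> ^ T * R"
      using \<rho> R by (simp add: mult_left_le_one_le)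
    ultimately show ?thesis by linarith
  qed (use \<epsilon> in simp)
  then show "err \<le> K + \<epsilon>" using err by linarith
qed

theorem theorem1:
  fixes n k t T :: nat and c :: real
    and F :: "nat \<Rightarrow> nat \<Rightarrow> complex"
    and xhat e :: "nat \<Rightarrow> complex"
    and sel :: "(nat \<Rightarrow> complex) \<Rightarrow> nat \<Rightarrow> nat set"
  assumes n: "n \<ge> 1"
    and sel: "thr_rule n sel"
    and unitary: "unitary_mat n F"
    and c: "c > 0"
    and coh: "\<forall>i<n. \<forall>j<n. (cmod (F i j))\<^sup>2 \<le> c / real n"
    and sparse: "card {i. i < n \<and> e i \<noteq> 0} \<le> t"
    and t: "t \<ge> 1"
    and k: "1 \<le> k" "k \<le> n"
    and T: "T \<ge> 1"
  shows
   "(let y = (\<lambda>i. mat_vec n F xhat i + e i);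
         A = block_FI n F;
         xT = (\<lambda>i. IHT n sel y A k t T i);
         err = l2norm n (\<lambda>i. xT i - hk sel k xhat i);
         \<mu> = c * real k * real t / real n;
         \<rho>a = sqrt 27 * sqrt \<mu>;
         \<tau>a = sqrt 3 * sqrt (1 + 2 * sqrt \<mu>) / (1 - \<rho>a);
         \<rho>b = 2 * sqrt 2 * sqrt \<mu>;
         \<tau>b = 2 / (1 - \<rho>b);
         Ra = sqrt ((l2norm n (hk sel k xhat))\<^sup>2 + (l2norm n e)\<^sup>2);
         Rb = l2norm n (hk sel k xhat);
         tl = l2norm n (tk sel k xhat)
     in (0 < \<rho>a \<and> \<rho>a < 1 \<longrightarrow>
           err \<le> \<rho>a ^ (T + 1) * Ra + \<tau>a * tl \<and>
           (\<forall>\<epsilon>. 0 < \<epsilon> \<and> \<epsilon> < 1 \<and> real T \<ge> (ln (1 / \<epsilon>) + ln Ra) / ln (1 / \<rho>a)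
                 \<longrightarrow> err \<le> \<tau>a * tl + \<epsilon>))
      \<and> (0 < \<rho>b \<and> \<rho>b < 1 \<longrightarrow>
           err \<le> \<rho>b ^ (T + 1) * Rb + \<tau>b * (tl + l2norm n e) \<and>
           (\<forall>\<epsilon>. 0 < \<epsilon> \<and> \<epsilon> < 1 \<and> real T \<ge> (ln (1 / \<epsilon>) + ln Rb) / ln (1 / \<rho>b)
                 \<longrightarrow> err \<le> \<tau>b * (tl + l2norm n e) + \<epsilon>)))"
proof -
  interpret iht_recovery n F "c / real n" sel xhat e k t
    using unitary coh c sel by unfold_locales auto
  have \<mu>: "c / real n * real k * real t = c * real k * real t / real n" by simp
  note sparse_noise = error_bound_sparse_noise[OF sparse[folded nonzeros_def] refl, unfolded \<mu>]
  note dense_noise = error_bound_dense_noise[OF refl, unfolded \<mu>]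
  show ?thesis
    unfolding Let_def IHT_eq_iht_iterate l2norm_eq_l2norm_on
    by (intro conjI geometric_bound_imp_tolerance_bound sparse_noise dense_noise) simp_all
qed

end
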